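(* Let $T$ be an ultrametric tree of radius $1$, let $U$ be a nonempty upper subtree of $T$, and let $M$ be the set of minimal elements of $U$. For each $i\in M$ let $n_i$ be the number of leaves of $T$ that are descendants of $i$ (counting $i$ itself if it is a leaf), and set $n=\sum_{i\in M}n_i$. Then the symmetric matrix $A^{T,U}$ with rows and columns indexed by $M$ and entries \[ A^{T,U}_{ij}=\begin{cases}\big(1-\tfrac1n\big)-H(i\vee j), & i\ne j,\\[2pt] \big(1-\tfrac1n\big)-\big(1-\tfrac1{n_i}\big)H(i), & i=j,\end{cases} \] is positive semidefinite.
   Context: An ultrametric tree is a rooted tree with nonnegative edge lengths such that all leaves have the same distance (sum of edge lengths along the path) from the root; this common distance is the radius. The height $H(v)$ of a vertex $v$ is the distance from $v$ to its furthest descendant (equivalently, to any leaf below it). For distinct vertices $i,j$, $i\vee j$ denotes their lowest common ancestor, the unique vertex lying on all three paths connecting the root, $i$ and $j$. Regard $T$ as a poset with the root as maximum (ancestors above descendants); an upper subtree is a set $U$ of vertices such that every ancestor of a vertex of $U$ lies in $U$, and its minimal elements are the vertices of $U$ none of whose children lie in $U$. *)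

theory Defs
  imports Main "HOL-Library.Multiset" Complex_Main
begin

text \<open>A finite rooted tree on vertex set V with root r, given by a parent map
  (parent r = r, every vertex reaches the root by iterating parent) and edge lengths
  len v = length of the edge from v (v \<noteq> r) to its parent.\<close>

definition rooted_tree :: "'a set \<Rightarrow> 'a \<Rightarrow> ('a \<Rightarrow> 'a) \<Rightarrow> ('a \<Rightarrow> real) \<Rightarrow> bool" where
  "rooted_tree V r parent len \<longleftrightarrow>
     finite V \<and> r \<in> V \<and> parent r = r \<and>
     (\<forall>v\<in>V. parent v \<in> V) \<and>
     (\<forall>v\<in>V. \<exists>k. (parent ^^ k) v = r) \<and>
     (\<forall>v\<in>V - {r}. len v \<ge> 0)"

definition anc :: "('a \<Rightarrow> 'a) \<Rightarrow> 'a \<Rightarrow> 'a \<Rightarrow> bool" where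
  "anc parent u v \<longleftrightarrow> (\<exists>k. (parent ^^ k) v = u)"

definition is_child :: "'a set \<Rightarrow> ('a \<Rightarrow> 'a) \<Rightarrow> 'a \<Rightarrow> 'a \<Rightarrow> bool" where
  "is_child V parent c v \<longleftrightarrow> c \<in> V \<and> c \<noteq> v \<and> parent c = v"

definition is_leaf :: "'a set \<Rightarrow> ('a \<Rightarrow> 'a) \<Rightarrow> 'a \<Rightarrow> bool" where
  "is_leaf V parent v \<longleftrightarrow> v \<in> V \<and> \<not> (\<exists>c. is_child V parent c v)"

definition depth :: "'a \<Rightarrow> ('a \<Rightarrow> 'a) \<Rightarrow> ('a \<Rightarrow> real) \<Rightarrow> 'a \<Rightarrow> real" where
  "depth r parent len v = (\<Sum>k < (LEAST k. (parent ^^ k) v = r). len ((parent ^^ k) v))"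

definition ultrametric_tree :: "'a set \<Rightarrow> 'a \<Rightarrow> ('a \<Rightarrow> 'a) \<Rightarrow> ('a \<Rightarrow> real) \<Rightarrow> real \<Rightarrow> bool" where
  "ultrametric_tree V r parent len rho \<longleftrightarrow>
     rooted_tree V r parent len \<and>
     (\<forall>l. is_leaf V parent l \<longrightarrow> depth r parent len l = rho)"

definition height :: "'a set \<Rightarrow> 'a \<Rightarrow> ('a \<Rightarrow> 'a) \<Rightarrow> ('a \<Rightarrow> real) \<Rightarrow> 'a \<Rightarrow> real" where
  "height V r parent len v =
     Max {depth r parent len l - depth r parent len v | l. is_leaf V parent l \<and> anc parent v l}"

definition lca :: "'a set \<Rightarrow> ('a \<Rightarrow> 'a) \<Rightarrow> 'a \<Rightarrow> 'a \<Rightarrow> 'a" where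
  "lca V parent i j = (THE w. w \<in> V \<and> anc parent w i \<and> anc parent w j \<and>
       (\<forall>u\<in>V. anc parent u i \<and> anc parent u j \<longrightarrow> anc parent u w))"

definition upper_subtree :: "'a set \<Rightarrow> ('a \<Rightarrow> 'a) \<Rightarrow> 'a set \<Rightarrow> bool" where
  "upper_subtree V parent U \<longleftrightarrow> U \<subseteq> V \<and> (\<forall>u\<in>U. \<forall>w\<in>V. anc parent w u \<longrightarrow> w \<in> U)"

definition minimal_elems :: "'a set \<Rightarrow> ('a \<Rightarrow> 'a) \<Rightarrow> 'a set \<Rightarrow> 'a set" where
  "minimal_elems V parent U = {i \<in> U. \<not> (\<exists>c \<in> U. is_child V parent c i)}"

definition num_leaves_below :: "'a set \<Rightarrow> ('a \<Rightarrow> 'a) \<Rightarrow> 'a \<Rightarrow> nat" where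
  "num_leaves_below V parent i = card {l. is_leaf V parent l \<and> anc parent i l}"

definition psd_on :: "'a set \<Rightarrow> ('a \<Rightarrow> 'a \<Rightarrow> real) \<Rightarrow> bool" where
  "psd_on I A \<longleftrightarrow> (\<forall>x :: 'a \<Rightarrow> real. (\<Sum>i\<in>I. \<Sum>j\<in>I. x i * A i j * x j) \<ge> 0)"

definition matrix_TU :: "'a set \<Rightarrow> 'a \<Rightarrow> ('a \<Rightarrow> 'a) \<Rightarrow> ('a \<Rightarrow> real) \<Rightarrow> 'a set \<Rightarrow> 'a \<Rightarrow> 'a \<Rightarrow> real" where
  "matrix_TU V r parent len U i j =
    (let M = minimal_elems V parent U;
         ni = (\<lambda>k. real (num_leaves_below V parent k));
         n = (\<Sum>k\<in>M. ni k);
         H = height V r parent len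
     in if i \<noteq> j then (1 - 1 / n) - H (lca V parent i j)
        else (1 - 1 / n) - (1 - 1 / ni i) * H i)"

end

theory Submission
  imports Defs
begin

text \<open>
  Radius 1 gives \<open>H(v) = 1 - depth(v)\<close>, so the off-diagonal entries are \<open>depth(i \<or> j) - 1/n\<close>
  and the diagonal ones \<open>depth(i) - 1/n + H(i)/n\<^sub>i\<close>. Since \<open>depth(i \<or> j)\<close> is the total length
  of the edges lying above both \<open>i\<close> and \<open>j\<close>, the quadratic form at \<open>x\<close> equals
  \<open>\<Sum>\<^sub>e len(e) S\<^sub>e\<^sup>2 - (\<Sum>\<^sub>i x\<^sub>i)\<^sup>2/n + \<Sum>\<^sub>i H(i) x\<^sub>i\<^sup>2/n\<^sub>i\<close>, where \<open>S\<^sub>e\<close> sums \<open>x\<close> over the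
  indices below the edge \<open>e\<close>.

  Nonnegativity is proved bottom-up: with \<open>N\<^sub>v\<close> the sum of the weights \<open>n\<^sub>i\<close> below \<open>v\<close>, the term
  \<open>H(v) S\<^sub>v\<^sup>2/N\<^sub>v\<close> is bounded by the part of the form contributed by the subtree at \<open>v\<close>. The step
  from the children \<open>c\<close> to \<open>v\<close> is Titu's form of the Cauchy-Schwarz inequality together with
  \<open>H(v) = H(c) + len(c)\<close> and \<open>len(c) S\<^sub>c\<^sup>2/N\<^sub>c \<le> len(c) S\<^sub>c\<^sup>2\<close>, which holds because the weights
  are positive integers. At the root \<open>H = 1\<close>, which is the claim.
\<close>

lemma titu_lemma_pair:
  fixes a b c d :: real
  assumes "b \<ge> 0" "d \<ge> 0" "b = 0 \<longrightarrow> a = 0" "d = 0 \<longrightarrow> c = 0"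
  shows "(a + c)\<^sup>2 / (b + d) \<le> a\<^sup>2 / b + c\<^sup>2 / d"
proof (cases "b = 0 \<or> d = 0")
  case True
  then show ?thesis using assms by auto
next
  case False
  then have "b > 0" "d > 0" using assms by auto
  then have "a\<^sup>2 / b + c\<^sup>2 / d - (a + c)\<^sup>2 / (b + d) = (a * d - c * b)\<^sup>2 / (b * d * (b + d))"
    by (simp add: field_simps power2_eq_square)
  also have "\<dots> \<ge> 0" using \<open>b > 0\<close> \<open>d > 0\<close> by simp
  finally show ?thesis by simp
qed

lemma titu_lemma:
  fixes a b :: "'i \<Rightarrow> real"
  assumes "finite A" "\<forall>c\<in>A. b c \<ge> 0" "\<forall>c\<in>A. b c = 0 \<longrightarrow> a c = 0"
  shows "(sum a A)\<^sup>2 / sum b A \<le> (\<Sum>c\<in>A. (a c)\<^sup>2 / b c)"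
  using assms
proof (induction A rule: finite_induct)
  case empty
  then show ?case by simp
next
  case (insert c F)
  have "sum b F \<ge> 0" using insert.prems by (simp add: sum_nonneg)
  moreover have "sum a F = 0" if "sum b F = 0"
    using that insert.hyps(1) insert.prems by (simp add: sum_nonneg_eq_0_iff)
  ultimately have "(a c + sum a F)\<^sup>2 / (b c + sum b F) \<le> (a c)\<^sup>2 / b c + (sum a F)\<^sup>2 / sum b F"
    using insert.prems by (intro titu_lemma_pair) auto
  then show ?case using insert by simp
qed

lemma quadratic_form_restrict:
  fixes B :: "'i \<Rightarrow> 'i \<Rightarrow> real"
  assumes "finite A" "M \<subseteq> A"
  shows "(\<Sum>i\<in>M. \<Sum>j\<in>M. x i * B i j * x j)
    = (\<Sum>i\<in>A. \<Sum>j\<in>A. (if i \<in> M then x i else 0) * B i j * (if j \<in> M then x j else 0))"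
    (is "_ = ?rhs")
proof -
  have restrict: "sum g M = (\<Sum>i\<in>A. if i \<in> M then g i else 0)" for g :: "'i \<Rightarrow> real"
    using sum.inter_restrict[OF assms(1), of g M] assms(2) by (simp add: Int_absorb1)
  have "(\<Sum>i\<in>M. \<Sum>j\<in>M. x i * B i j * x j)
      = (\<Sum>i\<in>A. if i \<in> M then \<Sum>j\<in>A. if j \<in> M then x i * B i j * x j else 0 else 0)"
    by (simp add: restrict)
  also have "\<dots> = ?rhs"
    by (intro sum.cong) (auto intro: sum.cong)
  finally show ?thesis .
qed

lemma quadratic_form_split:
  fixes D :: "'i \<Rightarrow> 'i \<Rightarrow> real"
  assumes "finite I"
  shows "(\<Sum>i\<in>I. \<Sum>j\<in>I. x i * (D i j - c + (if i = j then e i else 0)) * x j)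
    = (\<Sum>i\<in>I. \<Sum>j\<in>I. x i * D i j * x j) - c * (sum x I)\<^sup>2 + (\<Sum>i\<in>I. e i * (x i)\<^sup>2)"
proof -
  have "x i * (D i j - c + (if i = j then e i else 0)) * x j
      = x i * D i j * x j - c * (x i * x j) + (if i = j then e i * (x i)\<^sup>2 else 0)" for i j
    by (simp add: algebra_simps power2_eq_square)
  moreover have "(\<Sum>i\<in>I. \<Sum>j\<in>I. x i * x j) = (sum x I)\<^sup>2"
    by (simp add: power2_eq_square sum_product)
  ultimately show ?thesis
    using assms by (simp add: sum.distrib sum_subtractf sum_distrib_left[symmetric])
qed

locale parent_tree =
  fixes V :: "'a set" and r :: 'a and parent :: "'a \<Rightarrow> 'a" and len :: "'a \<Rightarrow> real"
  assumes rooted_tree: "rooted_tree V r parent len"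
begin

lemma finite_V: "finite V"
  and root_in_V: "r \<in> V"
  and parent_root: "parent r = r"
  and parent_in_V: "v \<in> V \<Longrightarrow> parent v \<in> V"
  and reaches_root: "v \<in> V \<Longrightarrow> \<exists>k. (parent ^^ k) v = r"
  and len_nonneg: "v \<in> V \<Longrightarrow> v \<noteq> r \<Longrightarrow> len v \<ge> 0"
  using rooted_tree unfolding rooted_tree_def by auto

lemma funpow_parent_root: "(parent ^^ k) r = r"
  by (induction k) (auto simp: parent_root)

lemma funpow_parent_in_V: "v \<in> V \<Longrightarrow> (parent ^^ k) v \<in> V"
  by (induction k) (auto simp: parent_in_V)

lemma parent_cycle_imp_root:
  assumes "v \<in> V" "(parent ^^ p) v = v" "p > 0"
  shows "v = r"
proof -
  obtain k where k: "(parent ^^ k) v = r" using reaches_root assms(1) by blast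
  have periodic: "(parent ^^ (m * p)) v = v" for m
    by (induction m) (simp_all add: funpow_add assms(2))
  have "k * p = (k * p - k) + k" using assms(3) by simp
  then have "(parent ^^ (k * p)) v = (parent ^^ (k * p - k)) ((parent ^^ k) v)"
    by (metis funpow_add comp_apply)
  then show ?thesis using periodic[of k] by (simp add: k funpow_parent_root)
qed

lemma parent_neq: "v \<in> V \<Longrightarrow> v \<noteq> r \<Longrightarrow> parent v \<noteq> v"
  using parent_cycle_imp_root[of v 1] by auto

lemma anc_refl: "anc parent v v"
  unfolding anc_def by (rule exI[of _ 0]) simp

lemma anc_parent: "anc parent (parent v) v"
  unfolding anc_def by (rule exI[of _ 1]) simp

lemma anc_trans: "anc parent u v \<Longrightarrow> anc parent v w \<Longrightarrow> anc parent u w"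
  unfolding anc_def by (metis funpow_add comp_apply)

lemma anc_root: "v \<in> V \<Longrightarrow> anc parent r v"
  unfolding anc_def using reaches_root by blast

lemma anc_of_root: "anc parent u r \<Longrightarrow> u = r"
  unfolding anc_def using funpow_parent_root by blast

lemma anc_parent_if_neq: "anc parent u v \<Longrightarrow> u \<noteq> v \<Longrightarrow> anc parent u (parent v)"
  unfolding anc_def by (metis funpow_0 funpow_Suc_right comp_apply not0_implies_Suc)

lemma anc_linear:
  assumes "anc parent u w" "anc parent v w"
  shows "anc parent u v \<or> anc parent v u"
proof -
  obtain a b where a: "(parent ^^ a) w = u" and b: "(parent ^^ b) w = v"
    using assms unfolding anc_def by blast
  show ?thesis
  proof (cases "a \<le> b")
    case True
    then have "(parent ^^ (b - a)) u = v" using a b by (metis funpow_add comp_apply le_add_diff_inverse2)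
    then show ?thesis unfolding anc_def by blast
  next
    case False
    then have "(parent ^^ (a - b)) v = u" using a b by (metis funpow_add comp_apply le_add_diff_inverse2 nat_le_linear)
    then show ?thesis unfolding anc_def by blast
  qed
qed

lemma anc_antisym:
  assumes "v \<in> V" "anc parent u v" "anc parent v u"
  shows "u = v"
proof -
  obtain a b where a: "(parent ^^ a) v = u" and b: "(parent ^^ b) u = v"
    using assms(2,3) unfolding anc_def by blast
  then have "(parent ^^ (b + a)) v = v" by (simp add: funpow_add)
  then have "a = 0 \<or> v = r" using parent_cycle_imp_root[OF assms(1)] by auto
  then show ?thesis using a funpow_parent_root by auto
qed

definition level :: "'a \<Rightarrow> nat" where
  "level v = (LEAST k. (parent ^^ k) v = r)"

lemma level_root: "level r = 0"
  unfolding level_def by simp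

lemma level_parent:
  assumes "v \<in> V" "v \<noteq> r"
  shows "level v = Suc (level (parent v))"
proof -
  obtain k where "(parent ^^ k) v = r" using reaches_root assms(1) by blast
  then have "level v = Suc (LEAST k. (parent ^^ Suc k) v = r)"
    unfolding level_def using assms(2) by (intro Least_Suc) auto
  then show ?thesis
    unfolding level_def by (simp add: funpow_Suc_right del: funpow.simps)
qed

lemma depth_root: "depth r parent len r = 0"
  unfolding depth_def by simp

lemma depth_parent:
  assumes "v \<in> V" "v \<noteq> r"
  shows "depth r parent len v = len v + depth r parent len (parent v)"
proof -
  have "depth r parent len v = (\<Sum>k < Suc (level (parent v)). len ((parent ^^ k) v))"
    unfolding depth_def level_parent[OF assms, unfolded level_def, symmetric] level_def ..
  also have "\<dots> = len v + (\<Sum>k < level (parent v). len ((parent ^^ Suc k) v))"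
    by (subst sum.lessThan_Suc_shift) simp
  also have "\<dots> = len v + depth r parent len (parent v)"
    unfolding depth_def level_def by (simp add: funpow_Suc_right del: funpow.simps)
  finally show ?thesis .
qed

lemma ancestors_parent:
  assumes "v \<in> V" "v \<noteq> r"
  shows "{w \<in> V - {r}. anc parent w v} = insert v {w \<in> V - {r}. anc parent w (parent v)}"
    and "v \<notin> {w \<in> V - {r}. anc parent w (parent v)}"
proof -
  show "{w \<in> V - {r}. anc parent w v} = insert v {w \<in> V - {r}. anc parent w (parent v)}"
    using assms anc_parent_if_neq anc_refl anc_trans[OF _ anc_parent] by blast
  show "v \<notin> {w \<in> V - {r}. anc parent w (parent v)}"
    using anc_antisym[OF parent_in_V[OF assms(1)] _ anc_parent] parent_neq[OF assms] by auto
qed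

lemma depth_eq_sum_ancestors:
  "v \<in> V \<Longrightarrow> depth r parent len v = sum len {w \<in> V - {r}. anc parent w v}"
proof (induction "level v" arbitrary: v)
  case 0
  then have "v = r"
    using reaches_root unfolding level_def by (metis (mono_tags, lifting) LeastI_ex funpow_0)
  moreover have "{w \<in> V - {r}. anc parent w r} = {}"
    using anc_of_root by auto
  ultimately show ?case using depth_root by (metis sum.empty)
next
  case (Suc m)
  have "v \<noteq> r" using Suc.hyps(2) level_root by auto
  then have "m = level (parent v)" using Suc.hyps(2) level_parent[OF Suc.prems] by simp
  then have "depth r parent len (parent v) = sum len {w \<in> V - {r}. anc parent w (parent v)}"
    using Suc.hyps(1) parent_in_V[OF Suc.prems] by blast
  then show ?case
    using depth_parent[OF Suc.prems \<open>v \<noteq> r\<close>] ancestors_parent[OF Suc.prems \<open>v \<noteq> r\<close>] finite_V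
    by simp
qed

lemma leaf_below:
  assumes "v \<in> V"
  obtains l where "is_leaf V parent l" "anc parent v l"
proof -
  let ?D = "{w \<in> V. anc parent v w}"
  have "finite ?D" "?D \<noteq> {}" using finite_V assms anc_refl by auto
  then have "Max (level ` ?D) \<in> level ` ?D" by simp
  then obtain w where w: "w \<in> ?D" and "level w = Max (level ` ?D)" by auto
  with \<open>finite ?D\<close> have w_max: "level u \<le> level w" if "u \<in> ?D" for u
    using that by simp
  have "is_leaf V parent w"
    unfolding is_leaf_def is_child_def
  proof (intro conjI notI)
    show "w \<in> V" using w by simp
    assume "\<exists>c. c \<in> V \<and> c \<noteq> w \<and> parent c = w"
    then obtain c where c: "c \<in> V" "c \<noteq> w" "parent c = w" by blast
    then have "c \<noteq> r" using parent_root by auto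
    then have "level c = Suc (level w)" using level_parent[OF c(1)] c by simp
    moreover have "c \<in> ?D" using c w anc_trans[OF _ anc_parent, of v c] by auto
    ultimately show False using w_max by fastforce
  qed
  then show ?thesis using that w by blast
qed

definition descendants :: "'a \<Rightarrow> 'a set" where
  "descendants v = {w \<in> V. anc parent v w}"

definition children :: "'a \<Rightarrow> 'a set" where
  "children v = {c \<in> V. c \<noteq> v \<and> parent c = v}"

lemma finite_descendants: "finite (descendants v)"
  unfolding descendants_def using finite_V by simp

lemma finite_children: "finite (children v)"
  unfolding children_def using finite_V by simp

lemma descendants_root: "descendants r = V"
  unfolding descendants_def using anc_root by auto

lemma anc_child: "c \<in> children v \<Longrightarrow> anc parent v c"
  unfolding children_def using anc_parent by auto

lemma child_in_V: "c \<in> children v \<Longrightarrow> c \<in> V \<and> c \<noteq> r \<and> parent c = v"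
  unfolding children_def using parent_root by auto

lemma ex_child_anc:
  assumes "(parent ^^ k) w = v" "w \<in> V" "w \<noteq> v"
  shows "\<exists>c \<in> children v. anc parent c w"
  using assms
proof (induction k arbitrary: w)
  case 0
  then show ?case by simp
next
  case (Suc k)
  show ?case
  proof (cases "parent w = v")
    case True
    then show ?thesis using Suc.prems anc_refl unfolding children_def by blast
  next
    case False
    moreover have "(parent ^^ k) (parent w) = v"
      using Suc.prems(1) by (simp add: funpow_Suc_right del: funpow.simps)
    ultimately show ?thesis
      using Suc.IH parent_in_V[OF Suc.prems(2)] anc_trans[OF _ anc_parent] by blast
  qed
qed

lemma descendants_eq_insert_children:
  assumes "v \<in> V"
  shows "descendants v = insert v (\<Union>c \<in> children v. descendants c)"
proof
  show "descendants v \<subseteq> insert v (\<Union>c \<in> children v. descendants c)"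
  proof
    fix w assume w: "w \<in> descendants v"
    show "w \<in> insert v (\<Union>c \<in> children v. descendants c)"
    proof (cases "w = v")
      case False
      obtain k where "(parent ^^ k) w = v" using w unfolding descendants_def anc_def by blast
      then obtain c where "c \<in> children v" "anc parent c w"
        using ex_child_anc w False unfolding descendants_def by blast
      then show ?thesis using w unfolding descendants_def by blast
    qed simp
  qed
  show "insert v (\<Union>c \<in> children v. descendants c) \<subseteq> descendants v"
    using assms anc_refl unfolding descendants_def by (auto intro: anc_trans[OF anc_child])
qed

lemma not_in_descendants_child:
  assumes "c \<in> children v"
  shows "v \<notin> descendants c"
proof
  assume "v \<in> descendants c"
  then have "c = v"
    using anc_antisym[OF _ _ anc_child[OF assms]] unfolding descendants_def by blast
  then show False using assms unfolding children_def by blast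
qed

lemma descendants_children_disjoint:
  assumes "c \<in> children v" "c' \<in> children v" "c \<noteq> c'"
  shows "descendants c \<inter> descendants c' = {}"
proof -
  have not_anc: "\<not> anc parent c c'" if "c \<in> children v" "c' \<in> children v" "c \<noteq> c'" for c c'
  proof
    assume "anc parent c c'"
    then have "anc parent c v" using anc_parent_if_neq that child_in_V by metis
    then show False
      using not_in_descendants_child[OF that(1)] that(2) child_in_V parent_in_V
      unfolding descendants_def by auto
  qed
  show ?thesis
    using anc_linear not_anc assms unfolding descendants_def by blast
qed

lemma sum_descendants:
  assumes "v \<in> V"
  shows "sum f (descendants v) = f v + (\<Sum>c \<in> children v. sum f (descendants c))"
proof -
  have "sum f (descendants v) = f v + sum f (\<Union>c \<in> children v. descendants c)"
    using descendants_eq_insert_children[OF assms] not_in_descendants_child finite_children finite_descendants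
    by simp
  also have "sum f (\<Union>c \<in> children v. descendants c) = (\<Sum>c \<in> children v. sum f (descendants c))"
    using finite_children finite_descendants descendants_children_disjoint
    by (intro sum.UNION_disjoint) auto
  finally show ?thesis .
qed

lemma card_descendants_child_less:
  assumes "c \<in> children v"
  shows "card (descendants c) < card (descendants v)"
proof (rule psubset_card_mono[OF finite_descendants])
  have "v \<in> V" using assms child_in_V parent_in_V by blast
  then have "v \<in> descendants v" unfolding descendants_def using anc_refl by blast
  moreover have "descendants c \<subseteq> descendants v"
    unfolding descendants_def using anc_trans[OF anc_child[OF assms]] by blast
  ultimately show "descendants c \<subset> descendants v"
    using not_in_descendants_child[OF assms] by blast
qed

lemma lca_greatest:
  assumes "i \<in> V" "j \<in> V"
  shows lca_in_V: "lca V parent i j \<in> V"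
    and anc_lca_iff: "w \<in> V \<Longrightarrow> anc parent w (lca V parent i j) \<longleftrightarrow> anc parent w i \<and> anc parent w j"
proof -
  have "\<exists>k. anc parent ((parent ^^ k) i) j"
    using reaches_root[OF assms(1)] anc_root[OF assms(2)] by metis
  define k0 where "k0 = (LEAST k. anc parent ((parent ^^ k) i) j)"
  define a where "a = (parent ^^ k0) i"
  have a_j: "anc parent a j"
    unfolding a_def k0_def using \<open>\<exists>k. _\<close> by (rule LeastI_ex)
  have a_i: "anc parent a i" and a_V: "a \<in> V"
    unfolding a_def anc_def using funpow_parent_in_V[OF assms(1)] by blast+
  have below_a: "anc parent u a" if u_i: "anc parent u i" and u_j: "anc parent u j" for u
  proof -
    obtain k where k: "(parent ^^ k) i = u" using u_i unfolding anc_def by blast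
    then have "k0 \<le> k" unfolding k0_def using u_j by (intro Least_le) simp
    then have "(parent ^^ (k - k0)) a = u"
      unfolding a_def k[symmetric] by (metis funpow_add comp_apply le_add_diff_inverse2)
    then show ?thesis unfolding anc_def by blast
  qed
  have "lca V parent i j = a"
    unfolding lca_def
  proof (rule the_equality)
    fix b
    assume "b \<in> V \<and> anc parent b i \<and> anc parent b j \<and>
      (\<forall>u\<in>V. anc parent u i \<and> anc parent u j \<longrightarrow> anc parent u b)"
    then show "b = a" using a_V a_i a_j below_a anc_antisym[OF a_V] by blast
  qed (use a_V a_i a_j below_a in blast)
  then show "lca V parent i j \<in> V"
    and "w \<in> V \<Longrightarrow> anc parent w (lca V parent i j) \<longleftrightarrow> anc parent w i \<and> anc parent w j"
    using a_V a_i a_j below_a anc_trans by metis+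
qed

lemma lca_self:
  assumes "i \<in> V"
  shows "lca V parent i i = i"
proof -
  have "anc parent (lca V parent i i) i"
    using anc_lca_iff[OF assms assms lca_in_V[OF assms assms]] anc_refl by blast
  moreover have "anc parent i (lca V parent i i)"
    using anc_lca_iff[OF assms assms assms] anc_refl by blast
  ultimately show ?thesis using anc_antisym[OF assms] by blast
qed

lemma depth_lca:
  assumes "i \<in> V" "j \<in> V"
  shows "depth r parent len (lca V parent i j)
    = (\<Sum>w \<in> V - {r}. if anc parent w i \<and> anc parent w j then len w else 0)"
proof -
  have "depth r parent len (lca V parent i j) = sum len {w \<in> V - {r}. anc parent w (lca V parent i j)}"
    using depth_eq_sum_ancestors[OF lca_in_V[OF assms]] .
  also have "{w \<in> V - {r}. anc parent w (lca V parent i j)} = {w \<in> V - {r}. anc parent w i \<and> anc parent w j}"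
    using anc_lca_iff[OF assms] by blast
  also have "sum len \<dots> = (\<Sum>w \<in> V - {r}. if anc parent w i \<and> anc parent w j then len w else 0)"
    using finite_V by (intro sum.inter_filter) simp
  finally show ?thesis .
qed

definition subtree_sum :: "('a \<Rightarrow> 'b::comm_monoid_add) \<Rightarrow> 'a \<Rightarrow> 'b" where
  "subtree_sum f v = sum f (descendants v)"

lemma quadratic_form_depth_lca:
  "(\<Sum>i\<in>V. \<Sum>j\<in>V. x i * depth r parent len (lca V parent i j) * x j)
    = (\<Sum>w \<in> V - {r}. len w * (subtree_sum x w)\<^sup>2)"
proof -
  define y where "y w i = (if anc parent w i then x i else 0)" for w i
  have "(\<Sum>i\<in>V. \<Sum>j\<in>V. x i * depth r parent len (lca V parent i j) * x j)
      = (\<Sum>i\<in>V. \<Sum>j\<in>V. \<Sum>w \<in> V - {r}. len w * (y w i * y w j))"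
  proof (intro sum.cong refl)
    fix i j assume "i \<in> V" "j \<in> V"
    then show "x i * depth r parent len (lca V parent i j) * x j
        = (\<Sum>w \<in> V - {r}. len w * (y w i * y w j))"
      unfolding depth_lca[OF \<open>i \<in> V\<close> \<open>j \<in> V\<close>] sum_distrib_left sum_distrib_right y_def
      by (intro sum.cong) auto
  qed
  also have "\<dots> = (\<Sum>i\<in>V. \<Sum>w \<in> V - {r}. \<Sum>j\<in>V. len w * (y w i * y w j))"
    by (rule sum.cong[OF refl], rule sum.swap)
  also have "\<dots> = (\<Sum>w \<in> V - {r}. \<Sum>i\<in>V. \<Sum>j\<in>V. len w * (y w i * y w j))"
    by (rule sum.swap)
  also have "\<dots> = (\<Sum>w \<in> V - {r}. len w * ((\<Sum>i\<in>V. y w i) * (\<Sum>j\<in>V. y w j)))"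
    unfolding sum_product unfolding sum_distrib_left ..
  also have "\<dots> = (\<Sum>w \<in> V - {r}. len w * (subtree_sum x w)\<^sup>2)"
    unfolding y_def subtree_sum_def descendants_def
    by (simp add: sum.inter_filter[OF finite_V] power2_eq_square)
  finally show ?thesis .
qed

lemma num_leaves_below_pos:
  assumes "v \<in> V"
  shows "num_leaves_below V parent v \<ge> 1"
proof -
  have "finite {l. is_leaf V parent l \<and> anc parent v l}"
    using finite_V unfolding is_leaf_def by (rule finite_subset[rotated]) auto
  moreover obtain l where "is_leaf V parent l" "anc parent v l" using leaf_below[OF assms] .
  ultimately show ?thesis
    unfolding num_leaves_below_def by (metis (mono_tags) One_nat_def Suc_leI card_gt_0_iff empty_iff mem_Collect_eq)
qed

lemma depth_le_radius:
  assumes "ultrametric_tree V r parent len \<rho>" and "v \<in> V"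
  shows "depth r parent len v \<le> \<rho>"
proof -
  obtain l where l: "is_leaf V parent l" "anc parent v l" using leaf_below[OF assms(2)] .
  then have "l \<in> V" unfolding is_leaf_def by simp
  have "depth r parent len v = sum len {w \<in> V - {r}. anc parent w v}"
    by (rule depth_eq_sum_ancestors[OF assms(2)])
  also have "\<dots> \<le> sum len {w \<in> V - {r}. anc parent w l}"
    using finite_V len_nonneg anc_trans[OF _ l(2)] by (intro sum_mono2) auto
  also have "\<dots> = \<rho>"
    using depth_eq_sum_ancestors[OF \<open>l \<in> V\<close>] assms(1) l(1) unfolding ultrametric_tree_def by simp
  finally show ?thesis .
qed

lemma height_eq_radius_minus_depth:
  assumes "ultrametric_tree V r parent len \<rho>" and "v \<in> V"
  shows "height V r parent len v = \<rho> - depth r parent len v"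
proof -
  obtain l where "is_leaf V parent l" "anc parent v l" using leaf_below[OF assms(2)] .
  then have "{depth r parent len l - depth r parent len v | l. is_leaf V parent l \<and> anc parent v l}
      = {\<rho> - depth r parent len v}"
    using assms(1) unfolding ultrametric_tree_def by blast
  then show ?thesis unfolding height_def by simp
qed

context
  fixes x :: "'a \<Rightarrow> real" and \<nu> :: "'a \<Rightarrow> nat"
  assumes support: "\<And>w. \<nu> w = 0 \<Longrightarrow> x w = 0"
begin

lemma subtree_sum_support: "subtree_sum \<nu> v = 0 \<Longrightarrow> subtree_sum x v = 0"
  unfolding subtree_sum_def using support finite_descendants by simp

lemma titu_at_vertex:
  assumes "v \<in> V"
  shows "(subtree_sum x v)\<^sup>2 / subtree_sum \<nu> v
    \<le> (x v)\<^sup>2 / \<nu> v + (\<Sum>c \<in> children v. (subtree_sum x c)\<^sup>2 / subtree_sum \<nu> c)"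
proof -
  let ?S = "subtree_sum x" and ?N = "\<lambda>w. real (subtree_sum \<nu> w)"
  have S: "?S v = x v + (\<Sum>c \<in> children v. ?S c)"
    unfolding subtree_sum_def by (rule sum_descendants[OF assms])
  have N: "?N v = \<nu> v + (\<Sum>c \<in> children v. ?N c)"
    unfolding subtree_sum_def by (subst sum_descendants[OF assms]) simp
  have children_zero: "(\<Sum>c \<in> children v. ?S c) = 0" if "(\<Sum>c \<in> children v. ?N c) = 0"
    using that finite_children subtree_sum_support by (simp add: sum_nonneg_eq_0_iff)
  have "(x v + (\<Sum>c \<in> children v. ?S c))\<^sup>2 / (\<nu> v + (\<Sum>c \<in> children v. ?N c))
      \<le> (x v)\<^sup>2 / \<nu> v + (\<Sum>c \<in> children v. ?S c)\<^sup>2 / (\<Sum>c \<in> children v. ?N c)"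
    using support children_zero by (intro titu_lemma_pair) (auto simp: sum_nonneg)
  also have "(\<Sum>c \<in> children v. ?S c)\<^sup>2 / (\<Sum>c \<in> children v. ?N c)
      \<le> (\<Sum>c \<in> children v. (?S c)\<^sup>2 / ?N c)"
    using finite_children subtree_sum_support by (intro titu_lemma) auto
  finally show ?thesis using S N by simp
qed

lemma weighted_subtree_inequality:
  assumes depth_le: "\<And>w. w \<in> V \<Longrightarrow> depth r parent len w \<le> \<rho>" and "v \<in> V"
  shows "(\<rho> - depth r parent len v) * (subtree_sum x v)\<^sup>2 / subtree_sum \<nu> v + len v * (subtree_sum x v)\<^sup>2
    \<le> (\<Sum>w \<in> descendants v. len w * (subtree_sum x w)\<^sup>2 + (\<rho> - depth r parent len w) * (x w)\<^sup>2 / \<nu> w)"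
  using assms(2)
proof (induction "card (descendants v)" arbitrary: v rule: less_induct)
  case less
  let ?S = "subtree_sum x" and ?N = "\<lambda>w. real (subtree_sum \<nu> w)"
  let ?G = "\<lambda>v. \<Sum>w \<in> descendants v. len w * (?S w)\<^sup>2 + (\<rho> - depth r parent len w) * (x w)\<^sup>2 / \<nu> w"
  define h where "h = \<rho> - depth r parent len v"
  have "h \<ge> 0" unfolding h_def using depth_le[OF less.prems] by simp
  have child: "h * (?S c)\<^sup>2 / ?N c \<le> ?G c" if "c \<in> children v" for c
  proof -
    have "c \<in> V" "c \<noteq> r" "parent c = v" using child_in_V[OF that] by auto
    then have h_c: "h = (\<rho> - depth r parent len c) + len c"
      unfolding h_def using depth_parent by simp
    have "len c * (?S c)\<^sup>2 / ?N c \<le> len c * (?S c)\<^sup>2"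
    proof (cases "subtree_sum \<nu> c = 0")
      case False
      then have "?N c \<ge> 1" by simp
      then show ?thesis
        using divide_left_mono[of 1 "?N c" "len c * (?S c)\<^sup>2"] len_nonneg[OF \<open>c \<in> V\<close> \<open>c \<noteq> r\<close>]
        by simp
    qed (use subtree_sum_support in simp)
    moreover have "(\<rho> - depth r parent len c) * (?S c)\<^sup>2 / ?N c + len c * (?S c)\<^sup>2 \<le> ?G c"
      using less.hyps[OF card_descendants_child_less[OF that] \<open>c \<in> V\<close>] .
    ultimately show ?thesis unfolding h_c by (simp add: distrib_right add_divide_distrib)
  qed
  have "h * ((?S v)\<^sup>2 / ?N v) \<le> h * ((x v)\<^sup>2 / \<nu> v + (\<Sum>c \<in> children v. (?S c)\<^sup>2 / ?N c))"
    using titu_at_vertex[OF less.prems] \<open>h \<ge> 0\<close> by (rule mult_left_mono)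
  also have "\<dots> = h * (x v)\<^sup>2 / \<nu> v + (\<Sum>c \<in> children v. h * (?S c)\<^sup>2 / ?N c)"
    by (simp add: distrib_left sum_distrib_left)
  also have "\<dots> \<le> h * (x v)\<^sup>2 / \<nu> v + (\<Sum>c \<in> children v. ?G c)"
    using child by (simp add: sum_mono)
  also have "\<dots> = ?G v - len v * (?S v)\<^sup>2"
    unfolding h_def by (subst sum_descendants[OF less.prems]) simp
  finally show ?case unfolding h_def by simp
qed

lemma weighted_root_inequality:
  assumes "\<And>w. w \<in> V \<Longrightarrow> depth r parent len w \<le> \<rho>"
  shows "\<rho> * (sum x V)\<^sup>2 / sum \<nu> V
    \<le> (\<Sum>w \<in> V - {r}. len w * (subtree_sum x w)\<^sup>2) + (\<Sum>w \<in> V. (\<rho> - depth r parent len w) * (x w)\<^sup>2 / \<nu> w)"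
proof -
  have root: "subtree_sum f r = sum f V" for f :: "'a \<Rightarrow> 'b::comm_monoid_add"
    unfolding subtree_sum_def descendants_root ..
  have "\<rho> * (sum x V)\<^sup>2 / sum \<nu> V + len r * (sum x V)\<^sup>2
      \<le> (\<Sum>w \<in> V. len w * (subtree_sum x w)\<^sup>2) + (\<Sum>w \<in> V. (\<rho> - depth r parent len w) * (x w)\<^sup>2 / \<nu> w)"
    using weighted_subtree_inequality[OF assms root_in_V]
    unfolding root descendants_root depth_root sum.distrib by simp
  moreover have "(\<Sum>w \<in> V. len w * (subtree_sum x w)\<^sup>2)
      = len r * (sum x V)\<^sup>2 + (\<Sum>w \<in> V - {r}. len w * (subtree_sum x w)\<^sup>2)"
    using sum.remove[OF finite_V root_in_V, of "\<lambda>w. len w * (subtree_sum x w)\<^sup>2"]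
    unfolding root[of x] .
  ultimately show ?thesis by linarith
qed

end

end

lemma (in parent_tree) matrix_TU_eq:
  assumes "ultrametric_tree V r parent len 1" and "i \<in> V" "j \<in> V"
  shows "matrix_TU V r parent len U i j
    = depth r parent len (lca V parent i j)
      - 1 / (\<Sum>k \<in> minimal_elems V parent U. real (num_leaves_below V parent k))
      + (if i = j then (1 - depth r parent len i) / num_leaves_below V parent i else 0)"
proof (cases "i = j")
  case True
  then show ?thesis
    unfolding matrix_TU_def Let_def True height_eq_radius_minus_depth[OF assms(1,3)] lca_self[OF assms(3)]
    using num_leaves_below_pos[OF assms(3)] by (simp add: field_simps)
next
  case False
  then show ?thesis
    unfolding matrix_TU_def Let_def
    using height_eq_radius_minus_depth[OF assms(1) lca_in_V[OF assms(2,3)]] by simp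
qed

lemma (in parent_tree) quadratic_form_matrix_TU:
  fixes U :: "'a set" and x :: "'a \<Rightarrow> real"
  defines "M \<equiv> minimal_elems V parent U"
  defines "\<nu> \<equiv> \<lambda>k. if k \<in> M then num_leaves_below V parent k else 0"
    and "y \<equiv> \<lambda>i. if i \<in> M then x i else 0"
  assumes "ultrametric_tree V r parent len 1" and "M \<subseteq> V"
  shows "(\<Sum>i\<in>M. \<Sum>j\<in>M. x i * matrix_TU V r parent len U i j * x j)
    = (\<Sum>w \<in> V - {r}. len w * (subtree_sum y w)\<^sup>2) - (sum y V)\<^sup>2 / sum \<nu> V
      + (\<Sum>w \<in> V. (1 - depth r parent len w) * (y w)\<^sup>2 / \<nu> w)"
proof -
  have n: "(\<Sum>k \<in> M. real (num_leaves_below V parent k)) = sum \<nu> V"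
    unfolding \<nu>_def of_nat_sum[symmetric] using sum.inter_restrict[OF finite_V] assms(5)
    by (metis Int_absorb1)
  have entries: "matrix_TU V r parent len U i j = depth r parent len (lca V parent i j) - 1 / sum \<nu> V
      + (if i = j then (1 - depth r parent len i) / num_leaves_below V parent i else 0)"
    if "i \<in> V" "j \<in> V" for i j
    using matrix_TU_eq[OF assms(4) that, where U = U, folded M_def, unfolded n] .
  have weights: "(1 - depth r parent len w) / num_leaves_below V parent w * (y w)\<^sup>2
      = (1 - depth r parent len w) * (y w)\<^sup>2 / \<nu> w" for w
    unfolding \<nu>_def y_def by simp
  have "(\<Sum>i\<in>M. \<Sum>j\<in>M. x i * matrix_TU V r parent len U i j * x j)
      = (\<Sum>i\<in>V. \<Sum>j\<in>V. y i * matrix_TU V r parent len U i j * y j)"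
    unfolding y_def using finite_V assms(5) by (rule quadratic_form_restrict)
  also have "\<dots> = (\<Sum>i\<in>V. \<Sum>j\<in>V. y i * depth r parent len (lca V parent i j) * y j)
      - 1 / sum \<nu> V * (sum y V)\<^sup>2
      + (\<Sum>i\<in>V. (1 - depth r parent len i) / num_leaves_below V parent i * (y i)\<^sup>2)"
    by (simp add: entries quadratic_form_split[OF finite_V])
  finally show ?thesis unfolding quadratic_form_depth_lca weights by simp
qed

theorem proposition2p2:
  fixes V :: "'a set" and r :: 'a and parent :: "'a \<Rightarrow> 'a" and len :: "'a \<Rightarrow> real"
    and U :: "'a set"
  assumes "ultrametric_tree V r parent len 1"
    and "upper_subtree V parent U" and "U \<noteq> {}"
  shows "psd_on (minimal_elems V parent U) (matrix_TU V r parent len U)"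
  unfolding psd_on_def
proof
  interpret parent_tree V r parent len
    using assms(1) unfolding ultrametric_tree_def by unfold_locales blast
  let ?M = "minimal_elems V parent U"
  fix x :: "'a \<Rightarrow> real"
  define \<nu> where "\<nu> k = (if k \<in> ?M then num_leaves_below V parent k else 0)" for k
  define y where "y i = (if i \<in> ?M then x i else 0)" for i
  have "?M \<subseteq> V" using assms(2) unfolding minimal_elems_def upper_subtree_def by auto
  moreover have "y w = 0" if "\<nu> w = 0" for w
    using that num_leaves_below_pos[of w] \<open>?M \<subseteq> V\<close> unfolding \<nu>_def y_def by (cases "w \<in> ?M") auto
  ultimately show "0 \<le> (\<Sum>i\<in>?M. \<Sum>j\<in>?M. x i * matrix_TU V r parent len U i j * x j)"
    unfolding quadratic_form_matrix_TU[OF assms(1) \<open>?M \<subseteq> V\<close>, of x, folded \<nu>_def y_def]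
    using weighted_root_inequality[where x = y and \<nu> = \<nu> and \<rho> = 1] depth_le_radius[OF assms(1)]
    by simp
qed

end
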